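(* Let $n\ge4$ be even. Let $G$ have node set $\{w_0,w_1,\dots,w_{n/2}\}\cup W'$ with $|W'|=n/2-1$ (disjoint), and edges $(w_i,w_{i-1})$ for $1\le i\le n/2$ together with $(w_i,x)$ for every $1\le i\le n/2$ and every $x\in W'$ (so $d_+(w_i)=n/2$ for $1\le i\le n/2$). Consider the \textsc{Random Pick} process from the initial state in which only $w_0$ is colored. Then with probability at least $1-8/n$, the convergence time is at least $n^2/8$.
   Context: A state is a map $V\to\{b,r,u\}$ (blue, red, uncolored); colored means blue or red. \textsc{Random Pick} process: in each round $t$ every node with at least one out-neighbor picks an out-neighbor uniformly at random, independently; an uncolored node adopts the color of its pick if the pick is colored, and all other nodes keep their color. A state is stable if no uncolored node has a colored out-neighbor; the convergence time is the first round $t\ge0$ at which the state is stable. *)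

theory Defs
  imports "HOL-Probability.Probability"
begin

datatype color = Blue | Red | Uncolored

type_synonym 'v state = "'v \<Rightarrow> color"

definition out_nbrs :: "('v \<times> 'v) set \<Rightarrow> 'v \<Rightarrow> 'v set" where
  "out_nbrs E v = {x. (v, x) \<in> E}"

definition colored :: "color \<Rightarrow> bool" where
  "colored c \<longleftrightarrow> c \<noteq> Uncolored"

definition pick_pmf :: "'v set \<Rightarrow> ('v \<times> 'v) set \<Rightarrow> ('v \<Rightarrow> 'v) pmf" where
  "pick_pmf V E = Pi_pmf V undefined
     (\<lambda>v. if out_nbrs E v = {} then return_pmf v else pmf_of_set (out_nbrs E v))"

definition rp_step :: "'v set \<Rightarrow> ('v \<times> 'v) set \<Rightarrow> 'v state \<Rightarrow> 'v state pmf" where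
  "rp_step V E s = map_pmf
     (\<lambda>pick v. if v \<in> V \<and> out_nbrs E v \<noteq> {} \<and> s v = Uncolored \<and> colored (s (pick v))
               then s (pick v) else s v)
     (pick_pmf V E)"

definition stable :: "'v set \<Rightarrow> ('v \<times> 'v) set \<Rightarrow> 'v state \<Rightarrow> bool" where
  "stable V E s \<longleftrightarrow> (\<forall>v\<in>V. s v = Uncolored \<longrightarrow> (\<forall>x\<in>out_nbrs E v. \<not> colored (s x)))"

fun rp_traj :: "'v set \<Rightarrow> ('v \<times> 'v) set \<Rightarrow> 'v state \<Rightarrow> nat \<Rightarrow> 'v state list pmf" where
  "rp_traj V E s0 0 = return_pmf [s0]"
| "rp_traj V E s0 (Suc t) =
     bind_pmf (rp_traj V E s0 t) (\<lambda>xs. map_pmf (\<lambda>s'. xs @ [s']) (rp_step V E (last xs)))"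

text \<open>Probability that the convergence time (first round at which the state is
  stable) is at least T, i.e. the states at rounds 0..T-1 are all non-stable.\<close>
definition prob_conv_time_ge :: "'v set \<Rightarrow> ('v \<times> 'v) set \<Rightarrow> 'v state \<Rightarrow> nat \<Rightarrow> real" where
  "prob_conv_time_ge V E s0 T =
     measure_pmf.prob (rp_traj V E s0 T) {xs. \<forall>i<T. \<not> stable V E (xs ! i)}"

end

theory Submission
  imports Defs
begin

text \<open>Write \<open>m = n/2\<close>. From the initial state the colored nodes are always
  \<open>w\<^sub>0, \<dots>, w\<^sub>k\<close> for some \<open>k\<close>: the nodes of \<open>W'\<close> have no out-neighbours and stay
  uncolored, so the only node that can get colored in a round is \<open>w\<^sub>k\<^sub>+\<^sub>1\<close>, and it
  does so with probability \<open>1/m\<close>. The state is stable only when \<open>k = m\<close>.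
  Since \<open>2\<^sup>k\<close> grows in expectation by a factor of at most \<open>1 + 1/m\<close> per round,
  Markov's inequality bounds the probability of reaching \<open>k = m\<close> within \<open>T\<close>
  rounds by \<open>(1 + 1/m)\<^sup>T / 2\<^sup>m \<le> e\<^sup>T\<^sup>/\<^sup>m / 2\<^sup>m\<close>, which is at most \<open>4/m\<close> for
  \<open>T \<approx> m\<^sup>2/2\<close>.\<close>

lemma set_pmf_rp_traj:
  assumes "xs \<in> set_pmf (rp_traj V E s0 t)"
  shows "length xs = Suc t \<and> xs ! 0 = s0 \<and> (\<forall>i<t. xs ! Suc i \<in> set_pmf (rp_step V E (xs ! i)))"
  using assms
proof (induction t arbitrary: xs)
  case (Suc t)
  then obtain ys s' where ys: "ys \<in> set_pmf (rp_traj V E s0 t)"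
    and s': "s' \<in> set_pmf (rp_step V E (last ys))" and xs: "xs = ys @ [s']"
    by auto
  note IH = Suc.IH[OF ys]
  then have "last ys = ys ! t" by (cases ys rule: rev_cases) auto
  with IH s' show ?case
    by (auto simp: xs nth_append less_Suc_eq)
qed simp

lemma last_rp_traj:
  assumes "xs \<in> set_pmf (rp_traj V E s0 t)"
  shows "last xs = xs ! t"
proof -
  have "length xs = Suc t" using set_pmf_rp_traj[OF assms] by simp
  then have "xs \<noteq> []" by auto
  with \<open>length xs = Suc t\<close> show ?thesis by (simp add: last_conv_nth)
qed

lemma rp_traj_propagate:
  assumes xs: "xs \<in> set_pmf (rp_traj V E s0 t)"
    and step: "\<And>s s'. P s \<Longrightarrow> s' \<in> set_pmf (rp_step V E s) \<Longrightarrow> P s'"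
    and "P (xs ! i)" "i \<le> j" "j \<le> t"
  shows "P (xs ! j)"
  using \<open>i \<le> j\<close> \<open>j \<le> t\<close>
proof (induction j rule: dec_induct)
  case (step j)
  then show ?case using set_pmf_rp_traj[OF xs] assms(2) by auto
qed (use assms(3) in simp)

lemma rp_traj_invariant:
  assumes "xs \<in> set_pmf (rp_traj V E s0 t)"
    and "\<And>s s'. P s \<Longrightarrow> s' \<in> set_pmf (rp_step V E s) \<Longrightarrow> P s'"
    and "P s0" "i \<le> t"
  shows "P (xs ! i)"
  using rp_traj_propagate[of xs V E s0 t P 0 i] set_pmf_rp_traj[OF assms(1)] assms by simp

lemma nn_integral_rp_traj_last_le:
  fixes g :: "'v state \<Rightarrow> ennreal"
  assumes step: "\<And>s s'. P s \<Longrightarrow> s' \<in> set_pmf (rp_step V E s) \<Longrightarrow> P s'"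
    and growth: "\<And>s. P s \<Longrightarrow> (\<integral>\<^sup>+ s'. g s' \<partial>rp_step V E s) \<le> c * g s"
    and "P s0"
  shows "(\<integral>\<^sup>+ xs. g (last xs) \<partial>rp_traj V E s0 t) \<le> c ^ t * g s0"
proof (induction t)
  case (Suc t)
  have "(\<integral>\<^sup>+ xs. g (last xs) \<partial>rp_traj V E s0 (Suc t))
      = (\<integral>\<^sup>+ xs. (\<integral>\<^sup>+ s'. g s' \<partial>rp_step V E (last xs)) \<partial>rp_traj V E s0 t)"
    by (simp add: nn_integral_bind_pmf)
  also have "\<dots> \<le> (\<integral>\<^sup>+ xs. c * g (last xs) \<partial>rp_traj V E s0 t)"
  proof (rule nn_integral_mono_AE, rule AE_pmfI)
    fix xs assume xs: "xs \<in> set_pmf (rp_traj V E s0 t)"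
    then have "P (last xs)"
      using rp_traj_invariant[of xs V E s0 t P t] xs step \<open>P s0\<close> last_rp_traj[OF xs] by simp
    then show "(\<integral>\<^sup>+ s'. g s' \<partial>rp_step V E (last xs)) \<le> c * g (last xs)" by (rule growth)
  qed
  also have "\<dots> = c * (\<integral>\<^sup>+ xs. g (last xs) \<partial>rp_traj V E s0 t)"
    by (simp add: nn_integral_cmult)
  also have "\<dots> \<le> c * (c ^ t * g s0)"
    using Suc.IH by (intro mult_left_mono) auto
  finally show ?case by (simp add: mult.assoc)
qed simp

lemma prob_conv_time_ge_eq:
  "prob_conv_time_ge V E s0 T
     = 1 - measure_pmf.prob (rp_traj V E s0 T) {xs. \<exists>i<T. stable V E (xs ! i)}"
proof -
  let ?M = "rp_traj V E s0 T" and ?A = "{xs. \<exists>i<T. stable V E (xs ! i)}"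
  have "{xs. \<forall>i<T. \<not> stable V E (xs ! i)} = space (measure_pmf ?M) - ?A" by auto
  moreover have "measure_pmf.prob ?M (space (measure_pmf ?M) - ?A) = 1 - measure_pmf.prob ?M ?A"
    by (rule measure_pmf.prob_compl) simp
  ultimately show ?thesis unfolding prob_conv_time_ge_def by simp
qed

locale trap_path =
  fixes m :: nat and w :: "nat \<Rightarrow> 'v" and W' :: "'v set" and V :: "'v set"
    and E :: "('v \<times> 'v) set"
  assumes inj: "inj_on w {0..m}" and finite_W': "finite W'"
    and card_W': "card W' = m - 1" and disjoint: "w ` {0..m} \<inter> W' = {}"
    and V_def: "V = w ` {0..m} \<union> W'"
    and E_def: "E = {(w i, w (i - 1)) | i. 1 \<le> i \<and> i \<le> m}
           \<union> {(w i, x) | i x. 1 \<le> i \<and> i \<le> m \<and> x \<in> W'}"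
begin

lemma finite_V: "finite V"
  using finite_W' by (simp add: V_def)

lemma w_in_V: "i \<le> m \<Longrightarrow> w i \<in> V"
  by (auto simp: V_def)

lemma w_notin_W': "i \<le> m \<Longrightarrow> w i \<notin> W'"
  using disjoint by (auto simp: disjoint_iff)

lemma w_eq_iff: "i \<le> m \<Longrightarrow> j \<le> m \<Longrightarrow> w i = w j \<longleftrightarrow> i = j"
  using inj by (auto simp: inj_on_def)

lemma out_nbrs_w:
  assumes "1 \<le> i" "i \<le> m"
  shows "out_nbrs E (w i) = insert (w (i - 1)) W'"
proof -
  have "(w i, x) \<in> E \<longleftrightarrow> x = w (i - 1) \<or> x \<in> W'" for x
  proof
    assume "(w i, x) \<in> E"
    then obtain j where "1 \<le> j" "j \<le> m" "w i = w j" "x = w (j - 1) \<or> x \<in> W'"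
      unfolding E_def by auto
    with w_eq_iff[of i j] assms show "x = w (i - 1) \<or> x \<in> W'" by auto
  next
    assume "x = w (i - 1) \<or> x \<in> W'"
    then show "(w i, x) \<in> E" unfolding E_def using assms by blast
  qed
  then show ?thesis by (auto simp: out_nbrs_def)
qed

lemma out_nbrs_other: "v \<notin> w ` {1..m} \<Longrightarrow> out_nbrs E v = {}"
  by (auto simp: out_nbrs_def E_def)

lemma card_out_nbrs_w:
  assumes "1 \<le> i" "i \<le> m"
  shows "card (out_nbrs E (w i)) = m"
  using out_nbrs_w[OF assms] w_notin_W'[of "i - 1"] assms finite_W' card_W' by simp

definition colored_prefix :: "nat \<Rightarrow> 'v state \<Rightarrow> bool" where
  "colored_prefix k s \<longleftrightarrow> k \<le> m \<and> colored (s (w 0)) \<and> (\<forall>x\<in>W'. s x = Uncolored)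
      \<and> (\<forall>i\<in>{1..m}. colored (s (w i)) \<longleftrightarrow> i \<le> k)"

definition level :: "'v state \<Rightarrow> nat" where
  "level s = card {i\<in>{1..m}. colored (s (w i))}"

lemma level_colored_prefix: "colored_prefix k s \<Longrightarrow> level s = k"
proof -
  assume "colored_prefix k s"
  then have "{i\<in>{1..m}. colored (s (w i))} = {1..k}" unfolding colored_prefix_def by auto
  then show ?thesis by (simp add: level_def)
qed

lemma colored_prefix_initial:
  assumes "colored (s (w 0))" "\<forall>v \<in> V - {w 0}. s v = Uncolored"
  shows "colored_prefix 0 s"
proof -
  have "w i \<in> V - {w 0}" if "i \<in> {1..m}" for i
    using that w_in_V[of i] w_eq_iff[of i 0] by auto
  moreover have "W' \<subseteq> V - {w 0}"
    using w_notin_W'[of 0] by (auto simp: V_def)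
  ultimately show ?thesis
    using assms by (auto simp: colored_prefix_def colored_def)
qed

definition update :: "'v state \<Rightarrow> ('v \<Rightarrow> 'v) \<Rightarrow> 'v state" where
  "update s pick = (\<lambda>v. if v \<in> V \<and> out_nbrs E v \<noteq> {} \<and> s v = Uncolored \<and> colored (s (pick v))
               then s (pick v) else s v)"

lemma rp_step_eq: "rp_step V E s = map_pmf (update s) (pick_pmf V E)"
  unfolding rp_step_def update_def by (rule refl)

lemma pick_in_out_nbrs:
  assumes "f \<in> set_pmf (pick_pmf V E)" "1 \<le> i" "i \<le> m"
  shows "f (w i) \<in> insert (w (i - 1)) W'"
proof -
  have "f (w i) \<in> set_pmf (pmf_of_set (out_nbrs E (w i)))"
    using assms w_in_V[of i] out_nbrs_w[OF assms(2,3)]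
    unfolding pick_pmf_def set_Pi_pmf[OF finite_V] PiE_dflt_def by auto
  then show ?thesis using out_nbrs_w[OF assms(2,3)] finite_W' by auto
qed

lemma prob_pick_predecessor:
  assumes "k < m"
  shows "measure_pmf.prob (pick_pmf V E) {f. f (w (Suc k)) = w k} = 1 / real m"
proof -
  have "measure_pmf.prob (pick_pmf V E) {f. f (w (Suc k)) = w k}
      = measure_pmf.prob (map_pmf (\<lambda>f. f (w (Suc k))) (pick_pmf V E)) {w k}"
    by (simp add: vimage_def)
  also have "map_pmf (\<lambda>f. f (w (Suc k))) (pick_pmf V E) = pmf_of_set (out_nbrs E (w (Suc k)))"
    unfolding pick_pmf_def Pi_pmf_component[OF finite_V]
    using w_in_V[of "Suc k"] assms out_nbrs_w[of "Suc k"] by auto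
  also have "measure_pmf.prob \<dots> {w k} = 1 / real m"
    using out_nbrs_w[of "Suc k"] card_out_nbrs_w[of "Suc k"] assms finite_W'
    by (subst measure_pmf_of_set) auto
  finally show ?thesis .
qed

lemma colored_prefix_update:
  assumes s: "colored_prefix k s" and f: "f \<in> set_pmf (pick_pmf V E)"
  shows "colored_prefix (if k < m \<and> f (w (Suc k)) = w k then Suc k else k) (update s f)"
proof -
  let ?k = "if k < m \<and> f (w (Suc k)) = w k then Suc k else k"
  have keep: "update s f v = s v" if "colored (s v)" for v
    using that by (simp add: update_def colored_def)
  have "update s f x = Uncolored" if "x \<in> W'" for x
  proof -
    have "out_nbrs E x = {}" using that w_notin_W' by (intro out_nbrs_other) auto
    then show ?thesis using s that unfolding colored_prefix_def update_def by auto
  qed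
  moreover have "colored (update s f (w i)) \<longleftrightarrow> i \<le> ?k" if i: "i \<in> {1..m}" for i
  proof (cases "i \<le> k")
    case True
    then show ?thesis using s i keep unfolding colored_prefix_def by auto
  next
    case False
    then have "s (w i) = Uncolored" using s i unfolding colored_prefix_def colored_def by auto
    then have "colored (update s f (w i)) \<longleftrightarrow> colored (s (f (w i)))"
      using out_nbrs_w[of i] w_in_V[of i] i by (auto simp: update_def colored_def)
    also have "\<dots> \<longleftrightarrow> f (w i) = w (i - 1) \<and> i - 1 \<le> k"
    proof (cases "f (w i) = w (i - 1)")
      case True
      have "colored (s (w (i - 1))) \<longleftrightarrow> i - 1 \<le> k"
      proof (cases "i - 1 = 0")
        case False
        then have "i - 1 \<in> {1..m}" using i by auto
        then show ?thesis using s unfolding colored_prefix_def by blast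
      qed (use s in \<open>auto simp: colored_prefix_def\<close>)
      then show ?thesis using True by simp
    next
      case False
      then have "f (w i) \<in> W'" using pick_in_out_nbrs[OF f] i by auto
      then show ?thesis using s False unfolding colored_prefix_def colored_def by auto
    qed
    also have "\<dots> \<longleftrightarrow> i \<le> ?k" using False i by (cases "i = Suc k") auto
    finally show ?thesis .
  qed
  ultimately show ?thesis using s keep unfolding colored_prefix_def by auto
qed

lemma colored_prefix_rp_step:
  assumes "colored_prefix k s" "s' \<in> set_pmf (rp_step V E s)"
  shows "\<exists>k' \<in> {k, Suc k}. colored_prefix k' s'"
proof -
  obtain f where "f \<in> set_pmf (pick_pmf V E)" "s' = update s f"
    using assms(2) by (auto simp: rp_step_eq)
  then show ?thesis using colored_prefix_update[OF assms(1), of f] by (cases "k < m \<and> f (w (Suc k)) = w k") auto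
qed

lemma stable_colored_prefix:
  assumes s: "colored_prefix k s" and "stable V E s"
  shows "k = m"
proof (rule ccontr)
  assume "k \<noteq> m"
  then have k: "k < m" using s unfolding colored_prefix_def by auto
  then have "Suc k \<in> {1..m}" by simp
  then have "s (w (Suc k)) = Uncolored"
    using s unfolding colored_prefix_def colored_def by fastforce
  moreover have "colored (s (w k))"
    using s k unfolding colored_prefix_def by (cases k) auto
  moreover have "w k \<in> out_nbrs E (w (Suc k))" using out_nbrs_w[of "Suc k"] k by auto
  ultimately show False
    using \<open>stable V E s\<close> w_in_V[of "Suc k"] k unfolding stable_def by auto
qed

lemma nn_integral_rp_step_level:
  assumes s: "colored_prefix k s"
  shows "(\<integral>\<^sup>+ s'. ennreal (2 ^ level s') \<partial>rp_step V E s)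
           \<le> ennreal (1 + 1 / real m) * ennreal (2 ^ level s)"
proof -
  define A where "A = {f. k < m \<and> f (w (Suc k)) = w k}"
  define p where "p = measure_pmf.prob (pick_pmf V E) A"
  have p: "p \<le> 1 / real m"
    using prob_pick_predecessor[of k] by (cases "k < m") (simp_all add: p_def A_def)
  have "(\<integral>\<^sup>+ s'. ennreal (2 ^ level s') \<partial>rp_step V E s)
      = (\<integral>\<^sup>+ f. ennreal (2 ^ level (update s f)) \<partial>pick_pmf V E)"
    by (simp add: rp_step_eq)
  also have "\<dots> = (\<integral>\<^sup>+ f. ennreal (2 ^ k) * (1 + indicator A f) \<partial>pick_pmf V E)"
  proof (rule nn_integral_cong_AE, rule AE_pmfI)
    fix f assume "f \<in> set_pmf (pick_pmf V E)"
    then have "level (update s f) = (if k < m \<and> f (w (Suc k)) = w k then Suc k else k)"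
      by (rule level_colored_prefix[OF colored_prefix_update[OF s]])
    then show "ennreal (2 ^ level (update s f)) = ennreal (2 ^ k) * (1 + indicator A f)"
      by (auto simp: A_def indicator_def ennreal_mult mult.commute)
  qed
  also have "\<dots> = ennreal (2 ^ k * (1 + p))"
    by (simp add: nn_integral_cmult nn_integral_add p_def measure_pmf.emeasure_eq_measure
        ennreal_mult ennreal_plus[symmetric])
  also have "\<dots> \<le> ennreal ((1 + 1 / real m) * 2 ^ k)"
  proof (intro ennreal_leI)
    have "p * 2 ^ k \<le> (1 / real m) * 2 ^ k" using p by (intro mult_right_mono) auto
    then show "2 ^ k * (1 + p) \<le> (1 + 1 / real m) * 2 ^ k" by (simp add: algebra_simps)
  qed
  finally show ?thesis
    using level_colored_prefix[OF s] by (simp add: ennreal_mult)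
qed

lemma prob_stable_before_le:
  assumes s0: "colored_prefix 0 s0"
  shows "measure_pmf.prob (rp_traj V E s0 T) {xs. \<exists>i<T. stable V E (xs ! i)}
           \<le> (1 + 1 / real m) ^ T / 2 ^ m"
proof -
  let ?M = "rp_traj V E s0 T" and ?c = "1 + 1 / real m"
  have step: "\<exists>k. colored_prefix k s'"
    if "\<exists>k. colored_prefix k s" "s' \<in> set_pmf (rp_step V E s)" for s s'
    using that colored_prefix_rp_step by blast
  have absorbing: "colored_prefix m s'"
    if "colored_prefix m s" "s' \<in> set_pmf (rp_step V E s)" for s s'
    using colored_prefix_rp_step[OF that] by (auto simp: colored_prefix_def)
  have "indicator {xs. \<exists>i<T. stable V E (xs ! i)} xs
          \<le> ennreal (1 / 2 ^ m) * ennreal (2 ^ level (last xs))"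
    if xs: "xs \<in> set_pmf ?M" for xs
  proof (cases "\<exists>i<T. stable V E (xs ! i)")
    case True
    then obtain i where i: "i < T" "stable V E (xs ! i)" by auto
    obtain k where "colored_prefix k (xs ! i)"
      using rp_traj_invariant[of xs V E s0 T "\<lambda>s. \<exists>k. colored_prefix k s" i] xs step s0 i
      by auto
    then have "colored_prefix m (xs ! i)"
      using stable_colored_prefix i(2) by auto
    then have "colored_prefix m (last xs)"
      using rp_traj_propagate[of xs V E s0 T "colored_prefix m" i T] xs absorbing i last_rp_traj[OF xs]
      by simp
    then show ?thesis
      using True level_colored_prefix by (simp add: ennreal_mult[symmetric])
  qed simp
  then have "(\<integral>\<^sup>+ xs. indicator {xs. \<exists>i<T. stable V E (xs ! i)} xs \<partial>?M)
      \<le> (\<integral>\<^sup>+ xs. ennreal (1 / 2 ^ m) * ennreal (2 ^ level (last xs)) \<partial>?M)"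
    by (intro nn_integral_mono_AE AE_pmfI)
  then have "emeasure ?M {xs. \<exists>i<T. stable V E (xs ! i)}
      \<le> (\<integral>\<^sup>+ xs. ennreal (1 / 2 ^ m) * ennreal (2 ^ level (last xs)) \<partial>?M)"
    by simp
  also have "\<dots> = ennreal (1 / 2 ^ m) * (\<integral>\<^sup>+ xs. ennreal (2 ^ level (last xs)) \<partial>?M)"
    by (simp add: nn_integral_cmult)
  also have "\<dots> \<le> ennreal (1 / 2 ^ m) * (ennreal ?c ^ T * ennreal (2 ^ level s0))"
    using nn_integral_rp_traj_last_le[of "\<lambda>s. \<exists>k. colored_prefix k s" V E
        "\<lambda>s. ennreal (2 ^ level s)" "ennreal ?c" s0 T] step nn_integral_rp_step_level s0
    by (intro mult_left_mono) auto
  also have "\<dots> = ennreal (?c ^ T / 2 ^ m)"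
    using level_colored_prefix[OF s0] ennreal_power[of ?c T]
    by (simp del: ennreal_plus add: ennreal_mult[symmetric])
  finally show ?thesis
    by (simp add: measure_pmf.emeasure_eq_measure)
qed

end

lemma exp_half_le: "exp (1/2::real) \<le> 5/3"
proof -
  have "exp (1/2::real) = exp (1/32) ^ 16" by (simp add: exp_of_nat_mult[symmetric])
  also have "\<dots> \<le> (1057/1024) ^ 16"
    using exp_bound[of "1/32"] by (intro power_mono) (auto simp: power2_eq_square)
  also have "\<dots> \<le> 5/3" by (simp add: power_divide)
  finally show ?thesis .
qed

lemma mult_exp_half_succ_le:
  "m \<ge> 5 \<Longrightarrow> real m * exp ((real m + 1) / 2) \<le> 4 * 2 ^ m"
proof (induction m rule: nat_induct_at_least)
  case base
  have "exp (3::real) = exp (1/2) ^ 6" by (simp add: exp_of_nat_mult[symmetric])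
  also have "\<dots> \<le> (5/3) ^ 6" using exp_half_le by (intro power_mono) auto
  finally show ?case by (simp add: power_divide)
next
  case (Suc m)
  have "exp ((real (Suc m) + 1) / 2) = exp ((real m + 1) / 2) * exp (1/2)"
    by (simp add: exp_add[symmetric] add_divide_distrib)
  then have "real (Suc m) * exp ((real (Suc m) + 1) / 2)
      = (real (Suc m) / real m) * (real m * exp ((real m + 1) / 2)) * exp (1/2)"
    using Suc.hyps by simp
  also have "\<dots> \<le> (6/5) * (4 * 2 ^ m) * (5/3)"
  proof -
    have "real (Suc m) / real m \<le> 6/5" using Suc.hyps by (simp add: field_simps)
    from mult_mono[OF this Suc.IH]
    have "(real (Suc m) / real m) * (real m * exp ((real m + 1) / 2)) \<le> (6/5) * (4 * 2 ^ m)"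
      by simp
    from mult_mono[OF this exp_half_le] show ?thesis by simp
  qed
  also have "\<dots> = 4 * 2 ^ Suc m" by simp
  finally show ?case .
qed

lemma one_plus_inverse_power_div_pow2_le:
  assumes m: "m \<ge> 5" and T: "real T \<le> real m ^ 2 / 2 + 1"
  shows "(1 + 1 / real m) ^ T / 2 ^ m \<le> 4 / real m"
proof -
  have "(1 + 1 / real m) ^ T \<le> exp (1 / real m) ^ T"
    using exp_ge_add_one_self[of "1 / real m"] by (intro power_mono) auto
  also have "\<dots> = exp (real T / real m)" by (simp add: exp_of_nat_mult[symmetric])
  also have "\<dots> \<le> exp ((real m + 1) / 2)"
    using m T by (simp add: field_simps power2_eq_square)
  finally have "(1 + 1 / real m) ^ T / 2 ^ m \<le> exp ((real m + 1) / 2) / 2 ^ m"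
    by (simp add: divide_right_mono)
  also have "\<dots> \<le> 4 / real m"
    using mult_exp_half_succ_le[OF m] m by (simp add: field_simps)
  finally show ?thesis .
qed

theorem mainTheorem10:
  fixes n :: nat and w :: "nat \<Rightarrow> 'v" and W' :: "'v set"
    and V :: "'v set" and E :: "('v \<times> 'v) set" and s0 :: "'v state"
  assumes "n \<ge> 4" and "even n"
    and "inj_on w {0..n div 2}"
    and "finite W'" and "card W' = n div 2 - 1"
    and "w ` {0..n div 2} \<inter> W' = {}"
    and "V = w ` {0..n div 2} \<union> W'"
    and "E = {(w i, w (i - 1)) | i. 1 \<le> i \<and> i \<le> n div 2}
           \<union> {(w i, x) | i x. 1 \<le> i \<and> i \<le> n div 2 \<and> x \<in> W'}"
    and "colored (s0 (w 0))"
    and "\<forall>v \<in> V - {w 0}. s0 v = Uncolored"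
  shows "prob_conv_time_ge V E s0 (nat \<lceil>real n ^ 2 / 8\<rceil>) \<ge> 1 - 8 / real n"
proof -
  define m where "m = n div 2"
  define T where "T = nat \<lceil>real n ^ 2 / 8\<rceil>"
  have n: "n = 2 * m" using assms(2) by (simp add: m_def)
  interpret trap_path m w W' V E
    by unfold_locales (use assms in \<open>simp_all add: m_def\<close>)
  have s0: "colored_prefix 0 s0" using colored_prefix_initial assms(9,10) .
  show ?thesis
  proof (cases "m \<le> 4")
    case True
    then have "1 - 8 / real n \<le> 0" using n assms(1) by (simp add: field_simps)
    then show ?thesis unfolding prob_conv_time_ge_def using measure_nonneg order_trans by blast
  next
    case False
    have "real T \<le> real m ^ 2 / 2 + 1"
      unfolding T_def n by (simp add: power_mult_distrib)
    then have "measure_pmf.prob (rp_traj V E s0 T) {xs. \<exists>i<T. stable V E (xs ! i)} \<le> 8 / real n"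
      using prob_stable_before_le[OF s0, of T] one_plus_inverse_power_div_pow2_le[of m T] False n
      by simp
    then show ?thesis unfolding T_def prob_conv_time_ge_eq by linarith
  qed
qed

end
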